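(* For every $n \geq 3$, the set $\mathcal{T}^{(3)}_n \subseteq \mathcal{T}_n$ (defined in the context) satisfies $|\mathcal{T}^{(3)}_n| = F_{2n-5}$ and \[\chi(\mathrm{KG}(\mathcal{T}^{(3)}_n)) = n-2,\] where $F_k$ is the $k$th Fibonacci number with $F_1 = F_2 = 1$.
   Context: Label the vertices of a convex $n$-gon by $1,\dots,n$ in cyclic order; $\mathrm{Diag}_n = \{\{i,j\} \subseteq [n]: i-j\not\equiv \pm1 \pmod n\}$; a triangulation is identified with its set of diagonals, and $\mathcal{T}_n$ is the set of triangulations. For a set system $\mathcal{F}$, $\mathrm{KG}(\mathcal{F})$ is the graph on $\mathcal{F}$ with $F,F'$ adjacent iff $F\cap F'=\emptyset$. A parenthesization of an ordered list of symbols $\sigma_1,\dots,\sigma_m$ is a way to insert parentheses into $\sigma_1\sigma_2\cdots\sigma_m$ so that it is read as $m-1$ applications of a binary product. $k$-parenthesizations are defined recursively: a $0$-parenthesization is a single symbol. For odd $k\geq 1$, a $k$-parenthesization is one of the form $\pi_1(\pi_2(\cdots(\pi_{\ell-1}(\pi_\ell\sigma))\cdots))$ with $\ell \geq 0$, $\sigma$ a single symbol and $\pi_1,\dots,\pi_\ell$ $(k-1)$-parenthesizations (of consecutive blocks of symbols). For even $k \geq 2$, a $k$-parenthesization is one of the form $(\cdots((\sigma\pi_1)\pi_2)\cdots\pi_{\ell-1})\pi_\ell$ with $\ell\ge 0$, $\sigma$ a single symbol and $\pi_i$ $(k-1)$-parenthesizations. Triangulations $T\in\mathcal{T}_n$ are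 in bijection with parenthesizations of $\sigma_1,\dots,\sigma_{n-1}$: $T$ corresponds to the unique parenthesization in which, for every triangle $\{i,j,k\}$ of $T$ with $i<j<k$ (triangles may use sides of the polygon), the product $\sigma_i\cdots\sigma_{k-1}$ is formed by multiplying $\sigma_i\cdots\sigma_{j-1}$ and $\sigma_j\cdots\sigma_{k-1}$. $\mathcal{T}^{(k)}_n$ is the set of triangulations corresponding to $k$-parenthesizations under this bijection. *)

theory Defs
  imports Main "HOL-Number_Theory.Cong" "HOL-Number_Theory.Fib"
begin

text \<open>Diagonals of the convex n-gon with vertices 1..n in cyclic order.\<close>
definition Diag :: "nat \<Rightarrow> nat set set" where
  "Diag n = {D. D \<subseteq> {1..n} \<and> card D = 2 \<and>
      (\<forall>i\<in>D. \<forall>j\<in>D. \<not> [int i - int j = 1] (mod int n))}"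

text \<open>Parenthesizations as binary trees: Leaf is a single symbol,
  Node a b is the product of a and b.\<close>
datatype ptree = Leaf | Node ptree ptree

fun leaves :: "ptree \<Rightarrow> nat" where
  "leaves Leaf = 1"
| "leaves (Node a b) = leaves a + leaves b"

text \<open>Odd k: pi_1(pi_2(...(pi_l sigma))), i.e. a right comb
  whose left factors are (k-1)-parenthesizations. Even k: ((sigma pi_1) pi_2)...pi_l,
  a left comb whose right factors are (k-1)-parenthesizations.\<close>
fun kpar :: "nat \<Rightarrow> ptree \<Rightarrow> bool" where
  "kpar 0 t = (t = Leaf)"
| "kpar (Suc k) Leaf = True"
| "kpar (Suc k) (Node a b) =
     (if odd (Suc k) then kpar k a \<and> kpar (Suc k) b
      else kpar (Suc k) a \<and> kpar k b)"

text \<open>If the parenthesization t is applied to the symbols sigma_i, ..., sigma_(i + leaves t - 1),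
  each subproduct sigma_a ... sigma_(b-1) corresponds to the segment {a,b}.  The triangle
  {a,c,b} arises for the product of sigma_a..sigma_(c-1) and sigma_c..sigma_(b-1).\<close>
fun segs :: "nat \<Rightarrow> ptree \<Rightarrow> nat set set" where
  "segs i Leaf = {{i, Suc i}}"
| "segs i (Node a b) = insert {i, i + leaves (Node a b)} (segs i a \<union> segs (i + leaves a) b)"

definition tri_of :: "nat \<Rightarrow> ptree \<Rightarrow> nat set set" where
  "tri_of n t = segs 1 t \<inter> Diag n"

definition Tri :: "nat \<Rightarrow> nat set set set" where
  "Tri n = tri_of n ` {t. leaves t = n - 1}"

definition Tri_k :: "nat \<Rightarrow> nat \<Rightarrow> nat set set set" where
  "Tri_k k n = tri_of n ` {t. leaves t = n - 1 \<and> kpar k t}"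

definition kneser_chromatic :: "'a set set \<Rightarrow> nat" where
  "kneser_chromatic F = (LEAST k. \<exists>c :: 'a set \<Rightarrow> nat.
      (\<forall>A\<in>F. c A < k) \<and>
      (\<forall>A\<in>F. \<forall>B\<in>F. A \<noteq> B \<and> A \<inter> B = {} \<longrightarrow> c A \<noteq> c B))"

end

theory Submission
  imports Defs
begin

text \<open>
  A 3-parenthesization is a right comb of 2-parenthesizations, and a 2-parenthesization is a left
  comb of right combs, of which there is just one of each length. So there are \<open>2 ^ (m - 2)\<close>
  2-parenthesizations of \<open>m \<ge> 2\<close> symbols, and the numbers \<open>a m\<close> of 3-parenthesizations satisfy
  \<open>a (m + 3) + a (m + 1) = 3 * a (m + 2)\<close>, the recurrence of the odd-indexed Fibonacci numbers.
  A triangulation determines its parenthesization, hence \<open>card (Tri_k 3 n) = a (n - 1)\<close>.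

  Colouring a triangulation by the smallest \<open>x\<close> with \<open>{1, x}\<close> a diagonal, and giving one more colour
  to the triangulations without a diagonal at vertex 1 (they all contain \<open>{2, n}\<close>), is a proper
  colouring with \<open>n - 2\<close> colours. Conversely, insert a new vertex \<open>n\<close> before the old vertex \<open>n\<close>.
  Adding the ear at the new vertex, or splitting the triangle on the last side by a diagonal to the
  new vertex, embeds \<open>Tri_k 3 n\<close> twice into \<open>Tri_k 3 (n + 1)\<close>; together with the fan at the new
  vertex this is Mycielski's configuration, so a proper \<open>k\<close>-colouring at \<open>n + 1\<close> yields a proper
  \<open>(k - 1)\<close>-colouring at \<open>n\<close>.
\<close>

section \<open>Diagonals\<close>

lemma Diag_pair_iff:
  assumes n: "3 \<le> n" and ab: "a < b"
  shows "{a, b} \<in> Diag n \<longleftrightarrow> 1 \<le> a \<and> b \<le> n \<and> a + 2 \<le> b \<and> \<not> (a = 1 \<and> b = n)"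
proof -
  have cong_1_iff: "[x = 1] (mod int n) \<longleftrightarrow> x = 1" if "0 \<le> x" "x < int n" for x :: int
    using cong_less_imp_eq_int[of x "int n" 1] that n by auto
  have "[int a - int a = 1] (mod int n) \<longleftrightarrow> False"
    using cong_1_iff[of 0] n by simp
  moreover have "[int b - int a = 1] (mod int n) \<longleftrightarrow> b = a + 1" if "1 \<le> a" "b \<le> n"
  proof -
    have "int b - int a < int n" using that by linarith
    then show ?thesis using cong_1_iff[of "int b - int a"] ab by auto
  qed
  moreover have "[int a - int b = 1] (mod int n) \<longleftrightarrow> a = 1 \<and> b = n" if "1 \<le> a" "b \<le> n"
  proof -
    have "[int a - int b = 1] (mod int n) \<longleftrightarrow> [int a - int b + int n = 1] (mod int n)"
      by (simp add: cong_def)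
    also have "\<dots> \<longleftrightarrow> int a - int b + int n = 1"
      using cong_1_iff[of "int a - int b + int n"] ab that by auto
    finally show ?thesis using that ab by auto
  qed
  moreover have "card {a, b} = 2" using ab by simp
  ultimately show ?thesis
    using ab unfolding Diag_def by auto
qed

lemma Diag_elem:
  assumes "D \<in> Diag n"
  obtains a b where "D = {a, b}" "a < b"
proof -
  obtain x y where "D = {x, y}" "x \<noteq> y"
    using assms unfolding Diag_def by (auto simp: card_2_iff)
  then show ?thesis
    using that by (metis insert_commute linorder_neqE_nat)
qed

lemma Diag_subset_atMost: "D \<in> Diag n \<Longrightarrow> D \<subseteq> {..n}"
  unfolding Diag_def by auto

lemma Diag_3: "Diag 3 = {}"
proof -
  have "D \<notin> Diag 3" for D
  proof
    assume D: "D \<in> Diag 3"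
    then obtain a b where "D = {a, b}" "a < b" by (rule Diag_elem)
    with D show False using Diag_pair_iff[of 3 a b] by auto
  qed
  then show ?thesis by blast
qed

lemma side_notin_Diag: "3 \<le> n \<Longrightarrow> {x, Suc x} \<notin> Diag n"
  using Diag_pair_iff[of n x "Suc x"] by simp

section \<open>Segments of a parenthesization\<close>

lemma leaves_ge_1: "1 \<le> leaves t"
  by (induction t) auto

lemma segs_elem:
  "s \<in> segs i t \<Longrightarrow> \<exists>u v. s = {u, v} \<and> i \<le> u \<and> u < v \<and> v \<le> i + leaves t"
proof (induction t arbitrary: i)
  case (Node a b)
  from Node.prems consider "s = {i, i + leaves (Node a b)}" | "s \<in> segs i a" | "s \<in> segs (i + leaves a) b"
    by auto
  then show ?case
  proof cases
    case 1
    then show ?thesis using leaves_ge_1[of a] by (intro exI[of _ i] exI[of _ "i + leaves (Node a b)"]) auto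
  next
    case 2
    then show ?thesis using Node.IH(1) by fastforce
  next
    case 3
    then show ?thesis using Node.IH(2) by fastforce
  qed
qed auto

lemma segs_subset: "s \<in> segs i t \<Longrightarrow> s \<subseteq> {i..i + leaves t}"
  using segs_elem[of s i t] by auto

lemma root_in_segs: "{i, i + leaves t} \<in> segs i t"
  by (cases t) auto

lemma side_in_segs: "i \<le> x \<Longrightarrow> x < i + leaves t \<Longrightarrow> {x, Suc x} \<in> segs i t"
proof (induction t arbitrary: i)
  case (Node a b)
  then show ?case by (cases "x < i + leaves a") auto
qed auto

lemma segs_Node_left: "segs i a = {s \<in> segs i (Node a b). s \<subseteq> {i..i + leaves a}}"
  using segs_subset[of _ i a] segs_elem[of _ "i + leaves a" b] leaves_ge_1[of b] by fastforce

lemma segs_Node_right: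
  "segs (i + leaves a) b = {s \<in> segs i (Node a b). s \<subseteq> {i + leaves a..i + leaves (Node a b)}}"
  using segs_subset[of _ "i + leaves a" b] segs_elem[of _ i a] leaves_ge_1[of a] by fastforce

text \<open>The root split is recovered from the segments as the largest \<open>v\<close> below the right end with
  \<open>{i, v}\<close> a segment.\<close>

lemma segs_Node_split_max:
  assumes "{i, v} \<in> segs i (Node a b)" and "v < i + leaves (Node a b)"
  shows "v \<le> i + leaves a"
proof -
  have "{i, v} \<in> segs i a \<or> {i, v} \<in> segs (i + leaves a) b"
    using assms by (auto simp: doubleton_eq_iff)
  then show ?thesis
    using segs_subset[of "{i, v}" i a] segs_subset[of "{i, v}" "i + leaves a" b] leaves_ge_1[of a]
    by auto
qed

lemma segs_inj: "segs i t = segs i t' \<Longrightarrow> leaves t = leaves t' \<Longrightarrow> t = t'"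
proof (induction t arbitrary: i t')
  case Leaf
  show ?case
  proof (cases t')
    case (Node x y)
    then show ?thesis using Leaf.prems(2) leaves_ge_1[of x] leaves_ge_1[of y] by simp
  qed simp
next
  case (Node a b)
  then obtain a' b' where t': "t' = Node a' b'"
    using leaves_ge_1[of a] leaves_ge_1[of b] by (cases t') auto
  have segs_eq: "segs i (Node a b) = segs i (Node a' b')"
    and leaves_eq: "leaves (Node a b) = leaves (Node a' b')"
    using Node.prems t' by simp_all
  have "i + leaves a \<le> i + leaves a'"
  proof (rule segs_Node_split_max)
    show "{i, i + leaves a} \<in> segs i (Node a' b')"
      using root_in_segs[of i a] segs_eq[symmetric] by simp
    show "i + leaves a < i + leaves (Node a' b')"
      using leaves_ge_1[of b] leaves_eq[symmetric] by simp
  qed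
  moreover have "i + leaves a' \<le> i + leaves a"
  proof (rule segs_Node_split_max)
    show "{i, i + leaves a'} \<in> segs i (Node a b)"
      using root_in_segs[of i a'] segs_eq by simp
    show "i + leaves a' < i + leaves (Node a b)"
      using leaves_ge_1[of b'] leaves_eq by simp
  qed
  ultimately have la: "leaves a = leaves a'" by simp
  have "segs i a = {s \<in> segs i (Node a b). s \<subseteq> {i..i + leaves a}}"
    by (rule segs_Node_left)
  also have "\<dots> = segs i a'"
    using segs_Node_left[of i a' b'] segs_eq la by simp
  finally have "a = a'" using Node.IH(1) la by blast
  have "segs (i + leaves a) b = {s \<in> segs i (Node a b). s \<subseteq> {i + leaves a..i + leaves (Node a b)}}"
    by (rule segs_Node_right)
  also have "\<dots> = segs (i + leaves a) b'"
    using segs_Node_right[of i a' b'] segs_eq leaves_eq la by simp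
  finally have "b = b'" using Node.IH(2) la leaves_eq by simp
  with \<open>a = a'\<close> show ?case using t' by simp
qed

lemma segs_eq_tri_of_Un:
  assumes n: "3 \<le> n" and l: "leaves t = n - 1"
  shows "segs 1 t = tri_of n t \<union> {{x, Suc x} | x. 1 \<le> x \<and> x < n} \<union> {{1, n}}"
proof
  show "segs 1 t \<subseteq> tri_of n t \<union> {{x, Suc x} | x. 1 \<le> x \<and> x < n} \<union> {{1, n}}"
  proof
    fix s assume s: "s \<in> segs 1 t"
    then obtain u v where uv: "s = {u, v}" "1 \<le> u" "u < v" "v \<le> n"
      using segs_elem[OF s] l n by fastforce
    show "s \<in> tri_of n t \<union> {{x, Suc x} | x. 1 \<le> x \<and> x < n} \<union> {{1, n}}"
    proof (cases "s \<in> Diag n")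
      case True
      then show ?thesis using s unfolding tri_of_def by blast
    next
      case False
      then have "v = Suc u \<or> (u = 1 \<and> v = n)"
        using Diag_pair_iff[OF n uv(3)] uv by auto
      then show ?thesis using uv by auto
    qed
  qed
  have "{x, Suc x} \<in> segs 1 t" if "1 \<le> x" "x < n" for x
    using side_in_segs[of 1 x t] that l n by simp
  moreover have "{1, n} \<in> segs 1 t"
    using root_in_segs[of 1 t] l n by simp
  ultimately show "tri_of n t \<union> {{x, Suc x} | x. 1 \<le> x \<and> x < n} \<union> {{1, n}} \<subseteq> segs 1 t"
    unfolding tri_of_def by blast
qed

lemma inj_on_tri_of:
  assumes "3 \<le> n"
  shows "inj_on (tri_of n) {t. leaves t = n - 1}"
proof (rule inj_onI)
  fix t t'
  assume "t \<in> {t. leaves t = n - 1}" "t' \<in> {t. leaves t = n - 1}" "tri_of n t = tri_of n t'"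
  then show "t = t'"
    using segs_inj[of 1 t t'] segs_eq_tri_of_Un[OF assms] by simp
qed

section \<open>Counting \<open>k\<close>-parenthesizations\<close>

definition kpars :: "nat \<Rightarrow> nat \<Rightarrow> ptree set" where
  "kpars k m = {t. leaves t = m \<and> kpar k t}"

lemma tri_of_in_Tri_k: "leaves t = n - 1 \<Longrightarrow> kpar k t \<Longrightarrow> tri_of n t \<in> Tri_k k n"
  unfolding Tri_k_def by blast

lemma card_Tri_k: "3 \<le> n \<Longrightarrow> card (Tri_k k n) = card (kpars k (n - 1))"
  unfolding Tri_k_def kpars_def
  by (rule card_image, rule inj_on_subset[OF inj_on_tri_of]) auto

lemma Collect_leaves_eq_Node:
  assumes "2 \<le> m"
  shows "{t. leaves t = m \<and> P t} = {Node a b | a b. leaves (Node a b) = m \<and> P (Node a b)}"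
proof -
  have "t \<in> {Node a b | a b. leaves (Node a b) = m \<and> P (Node a b)}" if "leaves t = m" "P t" for t
    using that assms by (cases t) auto
  then show ?thesis by auto
qed

lemma Node_trees_eq_UN:
  "{Node a b | a b. leaves (Node a b) = m \<and> P a \<and> Q b} =
     (\<Union>i\<in>{1..<m}. case_prod Node ` ({a. leaves a = i \<and> P a} \<times> {b. leaves b = m - i \<and> Q b}))"
proof (intro equalityI subsetI)
  fix t
  assume "t \<in> {Node a b | a b. leaves (Node a b) = m \<and> P a \<and> Q b}"
  then obtain a b where "t = Node a b" "leaves a + leaves b = m" "P a" "Q b"
    by auto
  moreover have "leaves a \<in> {1..<m}"
    using calculation(2) leaves_ge_1[of a] leaves_ge_1[of b] by simp
  ultimately show "t \<in> (\<Union>i\<in>{1..<m}. case_prod Node ` ({a. leaves a = i \<and> P a} \<times> {b. leaves b = m - i \<and> Q b}))"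
    by force
qed auto

lemma finite_leaves_eq: "finite {t. leaves t = m}"
proof (induction m rule: less_induct)
  case (less m)
  have "t \<in> {Leaf} \<union> {Node a b | a b. leaves (Node a b) = m \<and> True \<and> True}" if "leaves t = m" for t
    using that by (cases t) auto
  then have "{t. leaves t = m} \<subseteq> {Leaf} \<union> {Node a b | a b. leaves (Node a b) = m \<and> True \<and> True}"
    by blast
  moreover have "finite {Node a b | a b. leaves (Node a b) = m \<and> True \<and> True}"
    unfolding Node_trees_eq_UN using less leaves_ge_1 by auto
  ultimately show ?case
    using finite_subset by auto
qed

lemma card_Node_trees:
  "card {Node a b | a b. leaves (Node a b) = m \<and> P a \<and> Q b} =
     (\<Sum>i\<in>{1..<m}. card {a. leaves a = i \<and> P a} * card {b. leaves b = m - i \<and> Q b})"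
proof -
  have fin: "finite {t. leaves t = i \<and> R t}" for i R
    using finite_leaves_eq[of i] by (rule finite_subset[rotated]) auto
  show ?thesis
    unfolding Node_trees_eq_UN
  proof (subst card_UN_disjoint)
    show "(\<Sum>i\<in>{1..<m}. card (case_prod Node ` ({a. leaves a = i \<and> P a} \<times> {b. leaves b = m - i \<and> Q b})))
      = (\<Sum>i\<in>{1..<m}. card {a. leaves a = i \<and> P a} * card {b. leaves b = m - i \<and> Q b})"
      by (rule sum.cong) (auto simp: card_image inj_on_def card_cartesian_product)
  qed (use fin in auto)
qed

lemma card_kpars_conv:
  assumes "2 \<le> m" and "\<And>a b. kpar k (Node a b) \<longleftrightarrow> kpar l a \<and> kpar r b"
  shows "card (kpars k m) = (\<Sum>i\<in>{1..<m}. card (kpars l i) * card (kpars r (m - i)))"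
  unfolding kpars_def Collect_leaves_eq_Node[OF assms(1)] assms(2) card_Node_trees ..

lemma kpar_Leaf [simp]: "0 < k \<Longrightarrow> kpar k Leaf"
  by (cases k) auto

lemma kpar_2_Node: "kpar 2 (Node a b) \<longleftrightarrow> kpar 2 a \<and> kpar 1 b"
  by (simp add: numeral_2_eq_2)

lemma kpar_3_Node: "kpar 3 (Node a b) \<longleftrightarrow> kpar 2 a \<and> kpar 3 b"
  using kpar.simps(3)[of 2 a b] by (simp add: numeral_3_eq_3)

lemma kpars_Suc_1: "kpars (Suc k) 1 = {Leaf}"
proof -
  have "t = Leaf" if "leaves t = 1" for t
  proof (cases t)
    case (Node x y)
    then show ?thesis using that leaves_ge_1[of x] leaves_ge_1[of y] by simp
  qed
  then show ?thesis unfolding kpars_def by auto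
qed

lemma card_kpars_0: "card (kpars 0 m) = (if m = 1 then 1 else 0)"
proof -
  have "kpars 0 m = (if m = 1 then {Leaf} else {})"
    unfolding kpars_def by auto
  then show ?thesis by simp
qed

lemma card_kpars_1: "1 \<le> m \<Longrightarrow> card (kpars 1 m) = 1"
proof (induction m rule: nat_induct_at_least)
  case base
  then show ?case using kpars_Suc_1[of 0] by simp
next
  case (Suc m)
  have "card (kpars 1 (Suc m)) = (\<Sum>i\<in>{1..<Suc m}. card (kpars 0 i) * card (kpars 1 (Suc m - i)))"
    using Suc.hyps by (intro card_kpars_conv) auto
  also have "\<dots> = (\<Sum>i\<in>{1}. card (kpars 0 i) * card (kpars 1 (Suc m - i)))"
    by (rule sum.mono_neutral_right) (use Suc.hyps in \<open>auto simp: card_kpars_0\<close>)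
  also have "\<dots> = card (kpars 1 m)"
    by (simp add: card_kpars_0)
  finally show ?case using Suc.IH by simp
qed

lemma card_kpars_2_sum:
  assumes "2 \<le> m"
  shows "card (kpars 2 m) = (\<Sum>i\<in>{1..<m}. card (kpars 2 i))"
proof -
  have "card (kpars 2 m) = (\<Sum>i\<in>{1..<m}. card (kpars 2 i) * card (kpars 1 (m - i)))"
    by (rule card_kpars_conv[OF assms kpar_2_Node])
  also have "\<dots> = (\<Sum>i\<in>{1..<m}. card (kpars 2 i))"
  proof (rule sum.cong)
    fix i
    assume "i \<in> {1..<m}"
    then have "card (kpars 1 (m - i)) = 1"
      by (intro card_kpars_1) auto
    then show "card (kpars 2 i) * card (kpars 1 (m - i)) = card (kpars 2 i)"
      by simp
  qed simp
  finally show ?thesis .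
qed

lemma card_kpars_2_double: "2 \<le> m \<Longrightarrow> card (kpars 2 (Suc m)) = 2 * card (kpars 2 m)"
  using card_kpars_2_sum[of m] card_kpars_2_sum[of "Suc m"] by simp

lemma card_kpars_3_shift:
  assumes "1 \<le> m"
  shows "card (kpars 3 (Suc m)) = (\<Sum>i<m. card (kpars 2 (Suc i)) * card (kpars 3 (m - i)))"
proof -
  have "card (kpars 3 (Suc m)) = (\<Sum>i\<in>{Suc 0..<Suc m}. card (kpars 2 i) * card (kpars 3 (Suc m - i)))"
    using card_kpars_conv[OF _ kpar_3_Node] assms by simp
  also have "\<dots> = (\<Sum>i\<in>{0..<m}. card (kpars 2 (Suc i)) * card (kpars 3 (Suc m - Suc i)))"
    by (subst sum.atLeast_Suc_lessThan_Suc_shift) (simp add: comp_def)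
  also have "\<dots> = (\<Sum>i<m. card (kpars 2 (Suc i)) * card (kpars 3 (m - i)))"
    by (simp add: atLeast0LessThan)
  finally show ?thesis .
qed

lemma card_kpars_3_rec:
  "card (kpars 3 (m + 3)) + card (kpars 3 (m + 1)) = 3 * card (kpars 3 (m + 2))"
proof -
  define a where "a m = card (kpars 3 m)" for m
  define b where "b m = card (kpars 2 m)" for m
  \<comment> \<open>the products whose left factor has at least two symbols; as \<open>b\<close> doubles,
    \<open>X (Suc m) = a (Suc m) + 2 * X m\<close>\<close>
  define X where "X m = (\<Sum>i<m. b (Suc (Suc i)) * a (m - i))" for m
  have b1: "b 1 = 1" and b2: "b 2 = 1"
    using kpars_Suc_1[of 1] card_kpars_2_sum[of 2] unfolding b_def by (simp_all add: numeral_2_eq_2)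
  have a_Suc: "a (Suc (Suc m)) = a (Suc m) + X m" for m
  proof -
    have "a (Suc (Suc m)) = (\<Sum>i<Suc m. b (Suc i) * a (Suc m - i))"
      unfolding a_def b_def by (rule card_kpars_3_shift) simp
    also have "\<dots> = b 1 * a (Suc m) + X m"
      unfolding X_def by (subst sum.lessThan_Suc_shift) simp
    finally show ?thesis using b1 by simp
  qed
  have "X (Suc m) = b 2 * a (Suc m) + (\<Sum>i<m. b (Suc (Suc (Suc i))) * a (m - i))"
    unfolding X_def by (subst sum.lessThan_Suc_shift) (simp add: numeral_2_eq_2)
  also have "(\<Sum>i<m. b (Suc (Suc (Suc i))) * a (m - i)) = 2 * X m"
    unfolding X_def sum_distrib_left b_def by (rule sum.cong) (auto simp: card_kpars_2_double)
  finally have X_Suc: "X (Suc m) = a (Suc m) + 2 * X m"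
    using b2 by simp
  show ?thesis
    using a_Suc[of m] a_Suc[of "Suc m"] X_Suc unfolding a_def by (simp add: eval_nat_numeral)
qed

lemma fib_add_4: "fib (k + 4) + fib k = 3 * fib (k + 2)"
  by (simp add: eval_nat_numeral)

lemma card_kpars_3_2: "card (kpars 3 2) = 1"
  using card_kpars_conv[OF _ kpar_3_Node, of 2] kpars_Suc_1[of 1] kpars_Suc_1[of 2]
  by (simp add: numeral_2_eq_2 numeral_3_eq_3)

lemma card_kpars_3: "card (kpars 3 (m + 2)) = fib (2 * m + 1)"
proof (induction m rule: fib.induct)
  case 1
  show ?case using card_kpars_3_2 by (simp add: numeral_2_eq_2)
next
  case 2
  show ?case
    using card_kpars_3_rec[of 0] card_kpars_3_2 kpars_Suc_1[of 2]
    by (simp add: numeral_3_eq_3 eval_nat_numeral)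
next
  case (3 m)
  have "card (kpars 3 (m + 4)) + card (kpars 3 (m + 2)) = 3 * card (kpars 3 (m + 3))"
    using card_kpars_3_rec[of "m + 1"] by (simp add: ac_simps eval_nat_numeral)
  then show ?case
    using 3 fib_add_4[of "2 * m + 1"] by (simp add: eval_nat_numeral)
qed

lemma card_Tri_k_3:
  assumes "3 \<le> n"
  shows "card (Tri_k 3 n) = fib (2 * n - 5)"
proof -
  have "n - 1 = (n - 3) + 2" and "2 * n - 5 = 2 * (n - 3) + 1"
    using assms by simp_all
  then show ?thesis
    using card_Tri_k[OF assms, of 3] card_kpars_3[of "n - 3"] by simp
qed

section \<open>Colourings of Kneser graphs\<close>

definition kneser_adj :: "'a set \<Rightarrow> 'a set \<Rightarrow> bool" where
  "kneser_adj A B \<longleftrightarrow> A \<noteq> B \<and> A \<inter> B = {}"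

definition proper_colouring :: "nat \<Rightarrow> ('a set \<Rightarrow> nat) \<Rightarrow> 'a set set \<Rightarrow> bool" where
  "proper_colouring k c F \<longleftrightarrow> (\<forall>A\<in>F. c A < k) \<and> (\<forall>A\<in>F. \<forall>B\<in>F. kneser_adj A B \<longrightarrow> c A \<noteq> c B)"

lemma kneser_chromatic_eqI:
  assumes "proper_colouring k c F" and "\<And>k' c'. proper_colouring k' c' F \<Longrightarrow> k \<le> k'"
  shows "kneser_chromatic F = k"
  unfolding kneser_chromatic_def
  by (rule Least_equality) (use assms in \<open>auto simp: proper_colouring_def kneser_adj_def\<close>)

text \<open>Mycielski's argument: recolour \<open>T\<close> by the colour of \<open>\<Phi> T\<close>, or by that of \<open>\<Psi> T\<close> when
  \<open>\<Phi> T\<close> has the colour of \<open>w\<close>.\<close>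

lemma proper_colouring_Mycielski:
  assumes col: "proper_colouring k c G"
    and w: "w \<in> G" and \<Phi>: "\<Phi> ` F \<subseteq> G" and \<Psi>: "\<Psi> ` F \<subseteq> G"
    and \<Psi>_w: "\<And>T. T \<in> F \<Longrightarrow> kneser_adj (\<Psi> T) w"
    and adj: "\<And>T T'. T \<in> F \<Longrightarrow> T' \<in> F \<Longrightarrow> kneser_adj T T' \<Longrightarrow>
      kneser_adj (\<Phi> T) (\<Phi> T') \<and> kneser_adj (\<Psi> T) (\<Phi> T')"
  shows "\<exists>c'. proper_colouring (k - 1) c' F"
proof -
  have c_less: "c A < k" if "A \<in> G" for A
    using col that unfolding proper_colouring_def by blast
  have c_adj: "c A \<noteq> c B" if "A \<in> G" "B \<in> G" "kneser_adj A B" for A B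
    using col that unfolding proper_colouring_def by blast
  define c1 where "c1 T = (if c (\<Phi> T) = c w then c (\<Psi> T) else c (\<Phi> T))" for T
  define c2 where "c2 T = (if c1 T < c w then c1 T else c1 T - 1)" for T
  have c1_less: "c1 T < k" and c1_ne_w: "c1 T \<noteq> c w" if "T \<in> F" for T
    using c_less[of "\<Phi> T"] c_less[of "\<Psi> T"] c_adj[of "\<Psi> T" w] \<Phi> \<Psi> w \<Psi>_w that
    unfolding c1_def by auto
  have c1_adj: "c1 T \<noteq> c1 T'" if "T \<in> F" "T' \<in> F" "kneser_adj T T'" for T T'
  proof -
    have in_G: "\<Phi> T \<in> G" "\<Phi> T' \<in> G" "\<Psi> T \<in> G" "\<Psi> T' \<in> G"
      using \<Phi> \<Psi> that(1,2) by auto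
    have "kneser_adj T' T"
      using that(3) unfolding kneser_adj_def by blast
    then have "c (\<Phi> T) \<noteq> c (\<Phi> T')" "c (\<Psi> T) \<noteq> c (\<Phi> T')" "c (\<Psi> T') \<noteq> c (\<Phi> T)"
      using adj[OF that] adj[OF that(2,1)] c_adj in_G by blast+
    then show ?thesis
      unfolding c1_def by auto
  qed
  have "proper_colouring (k - 1) c2 F"
    unfolding proper_colouring_def
  proof (intro conjI ballI impI)
    fix A assume "A \<in> F"
    then show "c2 A < k - 1"
      using c1_less c1_ne_w c_less[OF w] unfolding c2_def by fastforce
  next
    fix A B assume "A \<in> F" "B \<in> F" "kneser_adj A B"
    then have "c1 A \<noteq> c1 B" "c1 A \<noteq> c w" "c1 B \<noteq> c w"
      using c1_adj c1_ne_w by blast+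
    then show "c2 A \<noteq> c2 B"
      unfolding c2_def by auto
  qed
  then show ?thesis by blast
qed

lemma Tri_subset_Diag: "T \<in> Tri n \<Longrightarrow> T \<subseteq> Diag n"
  unfolding Tri_def tri_of_def by auto

lemma Tri_k_subset_Tri: "Tri_k k n \<subseteq> Tri n"
  unfolding Tri_k_def Tri_def by auto

lemma Diag_at_1:
  assumes "3 \<le> n" and "{1, x} \<in> Diag n"
  shows "3 \<le> x \<and> x < n"
proof -
  have "1 < x"
    using assms(2) unfolding Diag_def by (cases "x = 0 \<or> x = 1") auto
  then show ?thesis
    using Diag_pair_iff[OF assms(1) \<open>1 < x\<close>] assms(2) by auto
qed

section \<open>A colouring with \<open>n - 2\<close> colours\<close>

lemma tri_of_3: "tri_of 3 t = {}"
  unfolding tri_of_def Diag_3 by simp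

lemma Tri_diag_at_1_or_2:
  assumes n: "4 \<le> n" and T: "T \<in> Tri n"
  shows "(\<exists>x. {1, x} \<in> T) \<or> {2, n} \<in> T"
proof -
  obtain t where l: "leaves t = n - 1" and T: "T = tri_of n t"
    using T unfolding Tri_def by blast
  show ?thesis
  proof (cases t)
    case Leaf
    then show ?thesis using n l by simp
  next
    case (Node a b)
    show ?thesis
    proof (cases "leaves a = 1")
      case True
      then have "{1 + leaves a, n} \<in> segs 1 t"
        using root_in_segs[of "1 + leaves a" b] Node l n by simp
      then have "{2, n} \<in> segs 1 t"
        using True by (metis one_add_one)
      moreover have "{2, n} \<in> Diag n"
        using Diag_pair_iff[of n 2 n] n by simp
      ultimately show ?thesis unfolding T tri_of_def by blast
    next
      case False
      then have "{1, 1 + leaves a} \<in> segs 1 t"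
        using root_in_segs[of 1 a] Node by simp
      moreover have "{1, 1 + leaves a} \<in> Diag n"
        using Diag_pair_iff[of n 1 "1 + leaves a"] False leaves_ge_1[of a] leaves_ge_1[of b] Node l n
        by simp arith
      ultimately show ?thesis unfolding T tri_of_def by blast
    qed
  qed
qed

lemma Least_diag_at_1:
  assumes n: "3 \<le> n" and T: "T \<in> Tri n" and ex: "\<exists>x. {1, x} \<in> T"
  shows "{1, LEAST x. {1, x} \<in> T} \<in> T" and "3 \<le> (LEAST x. {1, x} \<in> T)" and "(LEAST x. {1, x} \<in> T) < n"
proof -
  show "{1, LEAST x. {1, x} \<in> T} \<in> T"
    using ex by (rule LeastI_ex)
  then show "3 \<le> (LEAST x. {1, x} \<in> T)" and "(LEAST x. {1, x} \<in> T) < n"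
    using Diag_at_1[OF n] Tri_subset_Diag[OF T] by blast+
qed

text \<open>The smallest \<open>x\<close> lies in \<open>{3..<n}\<close>, so \<open>x - 3\<close> leaves the colour \<open>n - 3\<close> free.\<close>

definition first_diag_colour :: "nat \<Rightarrow> nat set set \<Rightarrow> nat" where
  "first_diag_colour n T = (if \<exists>x. {1, x} \<in> T then (LEAST x. {1, x} \<in> T) - 3 else n - 3)"

lemma first_diag_colour_less:
  assumes "3 \<le> n" and "T \<in> Tri n"
  shows "first_diag_colour n T < n - 2"
proof (cases "\<exists>x. {1, x} \<in> T")
  case True
  then show ?thesis
    using Least_diag_at_1(3)[OF assms True] assms(1) unfolding first_diag_colour_def by simp
next
  case False
  then show ?thesis
    using assms(1) unfolding first_diag_colour_def by simp
qed

lemma first_diag_colour_eq_imp_meet: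
  assumes n: "3 \<le> n" and A: "A \<in> Tri n" and B: "B \<in> Tri n"
    and eq: "first_diag_colour n A = first_diag_colour n B"
  shows "A = B \<or> A \<inter> B \<noteq> {}"
proof -
  consider (both) "\<exists>x. {1, x} \<in> A" "\<exists>x. {1, x} \<in> B" | (one) "(\<exists>x. {1, x} \<in> A) \<noteq> (\<exists>x. {1, x} \<in> B)"
    | (none) "\<nexists>x. {1, x} \<in> A" "\<nexists>x. {1, x} \<in> B"
    by blast
  then show ?thesis
  proof cases
    case both
    then have "(LEAST x. {1, x} \<in> A) = (LEAST x. {1, x} \<in> B)"
      using eq Least_diag_at_1[OF n A] Least_diag_at_1[OF n B] unfolding first_diag_colour_def by simp
    then show ?thesis
      using Least_diag_at_1(1)[OF n A both(1)] Least_diag_at_1(1)[OF n B both(2)] by auto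
  next
    case one
    then have False
      using eq Least_diag_at_1(2,3)[OF n A] Least_diag_at_1(2,3)[OF n B]
      unfolding first_diag_colour_def by (auto split: if_splits)
    then show ?thesis ..
  next
    case none
    show ?thesis
    proof (cases "n = 3")
      case True
      then show ?thesis using A B by (auto simp: Tri_def tri_of_3)
    next
      case False
      then show ?thesis using Tri_diag_at_1_or_2[OF _ A] Tri_diag_at_1_or_2[OF _ B] none n by auto
    qed
  qed
qed

lemma proper_colouring_first_diag_colour:
  assumes "3 \<le> n" and "F \<subseteq> Tri n"
  shows "proper_colouring (n - 2) (first_diag_colour n) F"
  using first_diag_colour_less first_diag_colour_eq_imp_meet assms
  unfolding proper_colouring_def kneser_adj_def by blast

section \<open>Inserting a vertex\<close>

text \<open>For a tree with right end \<open>e = i + leaves t\<close>, the old vertex \<open>e\<close>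
  becomes \<open>e + 1\<close> (\<open>shift_vertex e\<close>) and the new vertex \<open>e\<close> sits between \<open>e - 1\<close> and \<open>e + 1\<close>.
  \<open>ear_ext\<close> adds the ear \<open>{e - 1, e, e + 1}\<close>; \<open>split_ext\<close> splits the triangle on the side
  \<open>{e - 1, e + 1}\<close>, whose apex is \<open>last_apex i t\<close>, by the diagonal from the apex to \<open>e\<close>.\<close>

definition shift_vertex :: "nat \<Rightarrow> nat set \<Rightarrow> nat set" where
  "shift_vertex e s = (\<lambda>x. if x = e then Suc e else x) ` s"

fun ear_ext :: "ptree \<Rightarrow> ptree" where
  "ear_ext Leaf = Node Leaf Leaf"
| "ear_ext (Node a b) = Node a (ear_ext b)"

fun split_ext :: "ptree \<Rightarrow> ptree" where
  "split_ext Leaf = Node Leaf Leaf"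
| "split_ext (Node a b) = (if b = Leaf then Node (Node a Leaf) Leaf else Node a (split_ext b))"

fun last_apex :: "nat \<Rightarrow> ptree \<Rightarrow> nat" where
  "last_apex i Leaf = i"
| "last_apex i (Node a b) = (if b = Leaf then i else last_apex (i + leaves a) b)"

lemma leaves_ear_ext: "leaves (ear_ext t) = Suc (leaves t)"
  by (induction t) auto

lemma leaves_split_ext: "leaves (split_ext t) = Suc (leaves t)"
  by (induction t) auto

lemma kpar_3_ear_ext: "kpar 3 t \<Longrightarrow> kpar 3 (ear_ext t)"
  by (induction t) (auto simp: kpar_3_Node)

lemma kpar_3_split_ext: "kpar 3 t \<Longrightarrow> kpar 3 (split_ext t)"
  by (induction t) (auto simp: kpar_3_Node kpar_2_Node)

lemma shift_vertex_id: "e \<notin> s \<Longrightarrow> shift_vertex e s = s"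
  unfolding shift_vertex_def by (auto simp: image_iff)

lemma shift_vertex_pair:
  "shift_vertex e {a, b} = {if a = e then Suc e else a, if b = e then Suc e else b}"
  unfolding shift_vertex_def by simp

lemma notin_shift_vertex: "e \<notin> shift_vertex e s"
  unfolding shift_vertex_def by auto

lemma inj_on_shift_vertex: "inj_on (shift_vertex e) (Pow {..e})"
proof -
  have "inj_on (\<lambda>x. if x = e then Suc e else x) {..e}"
    by (auto simp: inj_on_def)
  show ?thesis
  proof (rule inj_onI)
    fix s s'
    assume "s \<in> Pow {..e}" "s' \<in> Pow {..e}" "shift_vertex e s = shift_vertex e s'"
    then show "s = s'"
      using inj_on_image_eq_iff[OF \<open>inj_on _ {..e}\<close>, of s s'] unfolding shift_vertex_def by blast
  qed
qed

lemma shift_vertex_image_segs_left: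
  "shift_vertex (i + leaves (Node a b)) ` segs i a = segs i a"
proof -
  have "shift_vertex (i + leaves (Node a b)) s = s" if "s \<in> segs i a" for s
    using segs_subset[OF that] leaves_ge_1[of b] by (intro shift_vertex_id) auto
  then show ?thesis by (auto simp: image_iff)
qed

lemma segs_ear_ext:
  "segs i (ear_ext t) = shift_vertex (i + leaves t) ` segs i t
     \<union> {{i + leaves t - 1, i + leaves t}, {i + leaves t, Suc (i + leaves t)}}"
proof (induction t arbitrary: i)
  case Leaf
  show ?case by (auto simp: shift_vertex_pair)
next
  case (Node a b)
  define e where "e = i + leaves (Node a b)"
  define j where "j = i + leaves a"
  have L: "segs i (ear_ext (Node a b)) =
      insert {i, Suc e} (segs i a \<union> (shift_vertex e ` segs j b \<union> {{e - 1, e}, {e, Suc e}}))"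
    using Node.IH[of j] unfolding e_def j_def by (simp add: leaves_ear_ext add.assoc)
  have R: "shift_vertex e ` segs i (Node a b) = insert {i, Suc e} (segs i a \<union> shift_vertex e ` segs j b)"
    using shift_vertex_image_segs_left[of i a b] leaves_ge_1[of a]
    unfolding e_def j_def by (simp add: image_Un shift_vertex_pair)
  show ?case
    unfolding e_def[symmetric] L R by blast
qed

lemma last_apex_segs:
  "t \<noteq> Leaf \<Longrightarrow> {last_apex i t, i + leaves t} \<in> segs i t \<and> {last_apex i t, i + leaves t - 1} \<in> segs i t
     \<and> i \<le> last_apex i t \<and> last_apex i t + 2 \<le> i + leaves t"
proof (induction t arbitrary: i)
  case (Node a b)
  show ?case
  proof (cases "b = Leaf")
    case True
    then show ?thesis using root_in_segs[of i a] leaves_ge_1[of a] by auto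
  next
    case False
    then show ?thesis using Node.IH(2)[OF False, of "i + leaves a"] by (auto simp: add.assoc)
  qed
qed simp

lemma segs_split_ext:
  "t \<noteq> Leaf \<Longrightarrow> segs i (split_ext t) =
     (shift_vertex (i + leaves t) ` segs i t - {{i + leaves t - 1, Suc (i + leaves t)}})
     \<union> {{last_apex i t, i + leaves t}, {i + leaves t - 1, i + leaves t}, {i + leaves t, Suc (i + leaves t)}}"
proof (induction t arbitrary: i)
  case (Node a b)
  define e where "e = i + leaves (Node a b)"
  define j where "j = i + leaves a"
  have not_left: "{e - 1, Suc e} \<notin> segs i a"
    using segs_subset[of "{e - 1, Suc e}" i a] leaves_ge_1[of b] unfolding e_def by auto
  have root_ne: "{i, Suc e} \<noteq> {e - 1, Suc e}"
    using leaves_ge_1[of a] leaves_ge_1[of b] unfolding e_def by (auto simp: doubleton_eq_iff)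
  have R: "shift_vertex e ` segs i (Node a b) = insert {i, Suc e} (segs i a \<union> shift_vertex e ` segs j b)"
    using shift_vertex_image_segs_left[of i a b] leaves_ge_1[of a]
    unfolding e_def j_def by (simp add: image_Un shift_vertex_pair)
  show ?case
  proof (cases "b = Leaf")
    case True
    then have "e - 1 = j" "e = Suc j"
      unfolding e_def j_def by simp_all
    then have L: "segs i (split_ext (Node a b)) =
        insert {i, Suc e} (insert {i, e} (segs i a \<union> {{e - 1, e}}) \<union> {{e, Suc e}})"
      and R': "shift_vertex e ` segs j b = {{e - 1, Suc e}}"
      using True unfolding e_def j_def by (simp_all add: shift_vertex_pair)
    have apex: "last_apex i (Node a b) = i"
      using True by simp
    show ?thesis
      unfolding e_def[symmetric] L R R' apex using root_ne not_left by blast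
  next
    case False
    have L: "segs i (split_ext (Node a b)) = insert {i, Suc e} (segs i a \<union>
        ((shift_vertex e ` segs j b - {{e - 1, Suc e}}) \<union> {{last_apex j b, e}, {e - 1, e}, {e, Suc e}}))"
      using False Node.IH(2)[OF False, of j] unfolding e_def j_def by (simp add: leaves_split_ext add.assoc)
    have apex: "last_apex i (Node a b) = last_apex j b"
      using False unfolding j_def by simp
    show ?thesis
      unfolding e_def[symmetric] L R apex using root_ne not_left by blast
  qed
qed simp

lemma shift_vertex_Diag_iff:
  assumes n: "3 \<le> n" and uv: "1 \<le> u" "u < v" "v \<le> n"
  shows "shift_vertex n {u, v} \<in> Diag (Suc n) \<longleftrightarrow> {u, v} \<in> Diag n \<or> (u = n - 1 \<and> v = n)"
proof (cases "v = n")
  case True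
  then have "shift_vertex n {u, v} = {u, Suc n}"
    using uv by (simp add: shift_vertex_pair)
  then have "shift_vertex n {u, v} \<in> Diag (Suc n) \<longleftrightarrow> u \<noteq> 1"
    using Diag_pair_iff[of "Suc n" u "Suc n"] True uv n by simp
  moreover have "{u, v} \<in> Diag n \<longleftrightarrow> u + 2 \<le> n \<and> u \<noteq> 1"
    using Diag_pair_iff[OF n uv(2)] True uv by simp
  ultimately show ?thesis
    using True uv n by arith
next
  case False
  then have "shift_vertex n {u, v} = {u, v}"
    using uv by (intro shift_vertex_id) auto
  then have "shift_vertex n {u, v} \<in> Diag (Suc n) \<longleftrightarrow> u + 2 \<le> v"
    using Diag_pair_iff[of "Suc n" u v] uv by simp
  moreover have "{u, v} \<in> Diag n \<longleftrightarrow> u + 2 \<le> v"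
    using Diag_pair_iff[OF n uv(2)] False uv by simp
  ultimately show ?thesis
    using False by simp
qed

lemma shift_vertex_segs_inter_Diag:
  assumes n: "3 \<le> n" and l: "leaves t = n - 1"
  shows "shift_vertex n ` segs 1 t \<inter> Diag (Suc n) = insert {n - 1, Suc n} (shift_vertex n ` tri_of n t)"
proof -
  have shift_Diag: "shift_vertex n s \<in> Diag (Suc n) \<longleftrightarrow> s \<in> Diag n \<or> s = {n - 1, n}"
    if s: "s \<in> segs 1 t" for s
  proof -
    obtain u v where uv: "s = {u, v}" "1 \<le> u" "u < v" "v \<le> n"
      using segs_elem[OF s] l n by auto
    then show ?thesis
      using shift_vertex_Diag_iff[OF n uv(2-4)] by (auto simp: doubleton_eq_iff)
  qed
  have last: "{n - 1, n} \<in> segs 1 t" "shift_vertex n {n - 1, n} = {n - 1, Suc n}"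
    using side_in_segs[of 1 "n - 1" t] l n by (auto simp: shift_vertex_pair)
  show ?thesis
  proof (intro equalityI subsetI)
    fix x
    assume "x \<in> shift_vertex n ` segs 1 t \<inter> Diag (Suc n)"
    then obtain s where "s \<in> segs 1 t" "x = shift_vertex n s" "s \<in> Diag n \<or> s = {n - 1, n}"
      using shift_Diag by blast
    then show "x \<in> insert {n - 1, Suc n} (shift_vertex n ` tri_of n t)"
      using last unfolding tri_of_def by auto
  next
    fix x
    assume "x \<in> insert {n - 1, Suc n} (shift_vertex n ` tri_of n t)"
    then obtain s where "s \<in> segs 1 t" "x = shift_vertex n s" "s \<in> Diag n \<or> s = {n - 1, n}"
      using last unfolding tri_of_def by auto
    then show "x \<in> shift_vertex n ` segs 1 t \<inter> Diag (Suc n)"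
      using shift_Diag by blast
  qed
qed

lemma shift_vertex_last_side_notin:
  "3 \<le> n \<Longrightarrow> {n - 1, Suc n} \<notin> shift_vertex n ` tri_of n t"
proof
  assume n: "3 \<le> n" and "{n - 1, Suc n} \<in> shift_vertex n ` tri_of n t"
  then obtain s where s: "s \<in> Diag n" "shift_vertex n s = {n - 1, Suc n}"
    unfolding tri_of_def by auto
  moreover have "shift_vertex n {n - 1, n} = {n - 1, Suc n}"
    using n by (simp add: shift_vertex_pair)
  ultimately have "s = {n - 1, n}"
    using inj_onD[OF inj_on_shift_vertex[of n]] Diag_subset_atMost[OF s(1)] by auto
  then show False
    using s(1) side_notin_Diag[OF n, of "n - 1"] n by simp
qed

lemma tri_of_ear_ext:
  assumes n: "3 \<le> n" and l: "leaves t = n - 1"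
  shows "tri_of (Suc n) (ear_ext t) = insert {n - 1, Suc n} (shift_vertex n ` tri_of n t)"
proof -
  have "segs 1 (ear_ext t) = shift_vertex n ` segs 1 t \<union> {{n - 1, n}, {n, Suc n}}"
    using segs_ear_ext[of 1 t] l n by simp
  moreover have "{n - 1, n} \<notin> Diag (Suc n)" "{n, Suc n} \<notin> Diag (Suc n)"
    using side_notin_Diag[of "Suc n" "n - 1"] side_notin_Diag[of "Suc n" n] n by simp_all
  ultimately have "tri_of (Suc n) (ear_ext t) = shift_vertex n ` segs 1 t \<inter> Diag (Suc n)"
    unfolding tri_of_def by blast
  then show ?thesis
    using shift_vertex_segs_inter_Diag[OF n l] by simp
qed

lemma last_apex_bounds:
  assumes "3 \<le> n" and "leaves t = n - 1"
  shows "1 \<le> last_apex 1 t" and "last_apex 1 t + 2 \<le> n"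
proof -
  have "t \<noteq> Leaf"
    using assms by auto
  then show "1 \<le> last_apex 1 t" and "last_apex 1 t + 2 \<le> n"
    using last_apex_segs[of t 1] assms by auto
qed

lemma tri_of_split_ext:
  assumes n: "3 \<le> n" and l: "leaves t = n - 1"
  shows "tri_of (Suc n) (split_ext t) = insert {last_apex 1 t, n} (shift_vertex n ` tri_of n t)"
proof -
  have "t \<noteq> Leaf"
    using l n by auto
  then have "segs 1 (split_ext t) = (shift_vertex n ` segs 1 t - {{n - 1, Suc n}})
      \<union> {{last_apex 1 t, n}, {n - 1, n}, {n, Suc n}}"
    using segs_split_ext[of t 1] l n by simp
  moreover have "{n - 1, n} \<notin> Diag (Suc n)" "{n, Suc n} \<notin> Diag (Suc n)"
    using side_notin_Diag[of "Suc n" "n - 1"] side_notin_Diag[of "Suc n" n] n by simp_all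
  moreover have "{last_apex 1 t, n} \<in> Diag (Suc n)"
    using Diag_pair_iff[of "Suc n" "last_apex 1 t" n] last_apex_bounds[OF n l] n by simp
  moreover have "((S - {Y}) \<union> {A, P, Q}) \<inter> D = insert A (S \<inter> D - {Y})"
    if "A \<in> D" "P \<notin> D" "Q \<notin> D" for S D :: "nat set set" and Y A P Q :: "nat set"
    using that by blast
  ultimately have "tri_of (Suc n) (split_ext t) =
      insert {last_apex 1 t, n} (shift_vertex n ` segs 1 t \<inter> Diag (Suc n) - {{n - 1, Suc n}})"
    unfolding tri_of_def by presburger
  then show ?thesis
    using shift_vertex_segs_inter_Diag[OF n l] shift_vertex_last_side_notin[OF n, of t]
    by (simp add: Diff_insert_absorb)
qed

text \<open>The triangle of \<open>t\<close> on the side \<open>{n - 1, n}\<close> is \<open>{last_apex 1 t, n - 1, n}\<close>, and one of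
  its other two sides is a diagonal.\<close>

lemma last_apex_diag:
  assumes n: "4 \<le> n" and l: "leaves t = n - 1"
  shows "(if last_apex 1 t = 1 then {1, n - 1} else {last_apex 1 t, n}) \<in> tri_of n t"
proof -
  have "t \<noteq> Leaf"
    using l n by auto
  then have segs: "{last_apex 1 t, n} \<in> segs 1 t" "{last_apex 1 t, n - 1} \<in> segs 1 t"
    using last_apex_segs[of t 1] l n by auto
  have bounds: "1 \<le> last_apex 1 t" "last_apex 1 t + 2 \<le> n"
    using last_apex_bounds[OF _ l] n by auto
  show ?thesis
  proof (cases "last_apex 1 t = 1")
    case True
    then have "{1, n - 1} \<in> Diag n"
      using Diag_pair_iff[of n 1 "n - 1"] n by simp arith
    then show ?thesis
      using True segs(2) unfolding tri_of_def by simp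
  next
    case False
    then have "{last_apex 1 t, n} \<in> Diag n"
      using Diag_pair_iff[of n "last_apex 1 t" n] bounds n by simp
    then show ?thesis
      using False segs(1) unfolding tri_of_def by simp
  qed
qed

lemma last_apex_neq:
  assumes n: "3 \<le> n" and l: "leaves t = n - 1" and l': "leaves t' = n - 1"
    and adj: "kneser_adj (tri_of n t) (tri_of n t')"
  shows "last_apex 1 t \<noteq> last_apex 1 t'"
proof
  assume apex_eq: "last_apex 1 t = last_apex 1 t'"
  have "n \<noteq> 3"
  proof
    assume "n = 3"
    then show False
      using adj by (simp add: kneser_adj_def tri_of_3)
  qed
  then have "4 \<le> n"
    using n by simp
  then show False
    using last_apex_diag[OF _ l] last_apex_diag[OF _ l', folded apex_eq] adj
    unfolding kneser_adj_def by blast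
qed

lemma kneser_adj_ext:
  assumes n: "3 \<le> n" and l: "leaves t = n - 1" and l': "leaves t' = n - 1"
    and adj: "kneser_adj (tri_of n t) (tri_of n t')"
  shows "kneser_adj (tri_of (Suc n) (split_ext t)) (tri_of (Suc n) (split_ext t'))"
    and "kneser_adj (tri_of (Suc n) (ear_ext t)) (tri_of (Suc n) (split_ext t'))"
proof -
  have adj_insert: "kneser_adj (insert A X) (insert B Y)"
    if "A \<noteq> B" "A \<notin> Y" "B \<notin> X" "X \<inter> Y = {}" for A B :: "nat set" and X Y
    using that unfolding kneser_adj_def by blast
  have "tri_of n t \<subseteq> Pow {..n}" "tri_of n t' \<subseteq> Pow {..n}"
    using Diag_subset_atMost unfolding tri_of_def by blast+
  then have shift_disj: "shift_vertex n ` tri_of n t \<inter> shift_vertex n ` tri_of n t' = {}"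
    using inj_on_image_Int[OF inj_on_shift_vertex] adj unfolding kneser_adj_def by (metis image_empty)
  have at_n: "X \<notin> shift_vertex n ` T" if "n \<in> X" for X T
    using that notin_shift_vertex[of n] by blast
  have "{last_apex 1 t, n} \<noteq> {last_apex 1 t', n}"
    using last_apex_neq[OF assms] last_apex_bounds[OF n l] last_apex_bounds[OF n l']
    by (auto simp: doubleton_eq_iff)
  then show "kneser_adj (tri_of (Suc n) (split_ext t)) (tri_of (Suc n) (split_ext t'))"
    unfolding tri_of_split_ext[OF n l] tri_of_split_ext[OF n l']
    by (intro adj_insert shift_disj at_n) simp_all
  have "{n - 1, Suc n} \<noteq> {last_apex 1 t', n}"
    using n by (auto simp: doubleton_eq_iff)
  then show "kneser_adj (tri_of (Suc n) (ear_ext t)) (tri_of (Suc n) (split_ext t'))"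
    unfolding tri_of_ear_ext[OF n l] tri_of_split_ext[OF n l']
    by (intro adj_insert shift_disj at_n shift_vertex_last_side_notin[OF n]) simp_all
qed

section \<open>The lower bound\<close>

fun right_comb :: "nat \<Rightarrow> ptree" where
  "right_comb 0 = Leaf"
| "right_comb (Suc m) = Node Leaf (right_comb m)"

lemma leaves_right_comb: "leaves (right_comb m) = Suc m"
  by (induction m) auto

lemma kpar_1_right_comb: "kpar 1 (right_comb m)"
  by (induction m) auto

lemma kpar_2_right_comb: "kpar 2 (right_comb m)"
  using kpar_1_right_comb[unfolded One_nat_def] by (cases m) (auto simp: kpar_2_Node)

lemma segs_right_comb: "s \<in> segs i (right_comb m) \<Longrightarrow> (\<exists>x. s = {x, Suc x}) \<or> i + Suc m \<in> s"
proof (induction m arbitrary: i)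
  case (Suc m)
  then have "s = {i, i + Suc (Suc m)} \<or> s = {i, Suc i} \<or> s \<in> segs (Suc i) (right_comb m)"
    by (simp add: leaves_right_comb)
  then show ?case
    using Suc.IH[of "Suc i"] by auto
qed auto

text \<open>The triangulation of the \<open>(n + 1)\<close>-gon by all diagonals at vertex \<open>n\<close>.\<close>

definition fan_tree :: "nat \<Rightarrow> ptree" where
  "fan_tree n = Node (right_comb (n - 2)) Leaf"

lemma fan_tree_in_Tri_k_3: "3 \<le> n \<Longrightarrow> tri_of (Suc n) (fan_tree n) \<in> Tri_k 3 (Suc n)"
  unfolding fan_tree_def
  by (intro tri_of_in_Tri_k) (simp_all add: leaves_right_comb kpar_3_Node kpar_2_right_comb)

lemma tri_of_fan_tree:
  assumes n: "3 \<le> n" and s: "s \<in> tri_of (Suc n) (fan_tree n)"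
  shows "n \<in> s"
proof -
  have l: "1 + leaves (right_comb (n - 2)) = n" and l': "1 + Suc (n - 2) = n"
    using n by (simp_all add: leaves_right_comb)
  have "s \<in> Diag (Suc n)" "s = {1, Suc n} \<or> s \<in> segs 1 (right_comb (n - 2)) \<or> s = {n, Suc n}"
    using s l unfolding tri_of_def fan_tree_def by auto
  moreover have "{1, Suc n} \<notin> Diag (Suc n)"
    using Diag_pair_iff[of "Suc n" 1 "Suc n"] n by simp
  ultimately show ?thesis
    using segs_right_comb[of s 1 "n - 2", unfolded l'] side_notin_Diag[of "Suc n"] n by auto
qed

lemma kneser_adj_ear_ext_fan_tree:
  assumes n: "3 \<le> n" and l: "leaves t = n - 1"
  shows "kneser_adj (tri_of (Suc n) (ear_ext t)) (tri_of (Suc n) (fan_tree n))"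
proof -
  have "{n - 1, Suc n} \<in> tri_of (Suc n) (ear_ext t)"
    unfolding tri_of_ear_ext[OF n l] by simp
  moreover have "n \<notin> X" if "X \<in> tri_of (Suc n) (ear_ext t)" for X
    using that notin_shift_vertex[of n] n unfolding tri_of_ear_ext[OF n l] by auto
  moreover have "n \<in> X" if "X \<in> tri_of (Suc n) (fan_tree n)" for X
    using tri_of_fan_tree[OF n that] .
  ultimately show ?thesis
    unfolding kneser_adj_def by blast
qed

lemma proper_colouring_Tri_k_3_Suc:
  assumes n: "3 \<le> n" and col: "proper_colouring k c (Tri_k 3 (Suc n))"
  shows "\<exists>c'. proper_colouring (k - 1) c' (Tri_k 3 n)"
proof -
  define P where "P = {t. leaves t = n - 1 \<and> kpar 3 t}"
  define tree where "tree = inv_into P (tri_of n)"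
  have tree: "leaves (tree T) = n - 1" "kpar 3 (tree T)" "tri_of n (tree T) = T"
    if "T \<in> Tri_k 3 n" for T
    using that inv_into_into[of T "tri_of n" P] f_inv_into_f[of T "tri_of n" P]
    unfolding Tri_k_def tree_def P_def by auto
  define split where "split T = tri_of (Suc n) (split_ext (tree T))" for T
  define ear where "ear T = tri_of (Suc n) (ear_ext (tree T))" for T
  show ?thesis
  proof (rule proper_colouring_Mycielski[OF col fan_tree_in_Tri_k_3[OF n], where \<Phi> = split and \<Psi> = ear])
    show "split ` Tri_k 3 n \<subseteq> Tri_k 3 (Suc n)" "ear ` Tri_k 3 n \<subseteq> Tri_k 3 (Suc n)"
      unfolding split_def ear_def using tree n
      by (auto intro!: tri_of_in_Tri_k simp: leaves_split_ext leaves_ear_ext kpar_3_split_ext kpar_3_ear_ext)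
  next
    fix T
    assume "T \<in> Tri_k 3 n"
    then show "kneser_adj (ear T) (tri_of (Suc n) (fan_tree n))"
      unfolding ear_def using kneser_adj_ear_ext_fan_tree[OF n] tree by simp
  next
    fix T T'
    assume T: "T \<in> Tri_k 3 n" and T': "T' \<in> Tri_k 3 n" and "kneser_adj T T'"
    then have "kneser_adj (tri_of n (tree T)) (tri_of n (tree T'))"
      using tree(3) by simp
    then show "kneser_adj (split T) (split T') \<and> kneser_adj (ear T) (split T')"
      unfolding split_def ear_def using kneser_adj_ext[OF n tree(1)[OF T] tree(1)[OF T']] by simp
  qed
qed

lemma proper_colouring_Tri_k_3_lower_bound: "3 \<le> n \<Longrightarrow> proper_colouring k c (Tri_k 3 n) \<Longrightarrow> n - 2 \<le> k"
proof (induction n arbitrary: k c rule: nat_induct_at_least)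
  case base
  have "tri_of 3 (Node Leaf Leaf) \<in> Tri_k 3 3"
    by (rule tri_of_in_Tri_k) (simp_all add: kpar_3_Node)
  then show ?case
    using base.prems unfolding proper_colouring_def by fastforce
next
  case (Suc n)
  then obtain c' where "proper_colouring (k - 1) c' (Tri_k 3 n)"
    using proper_colouring_Tri_k_3_Suc by blast
  then show ?case
    using Suc.IH Suc.hyps by fastforce
qed

lemma kneser_chromatic_Tri_k_3: "3 \<le> n \<Longrightarrow> kneser_chromatic (Tri_k 3 n) = n - 2"
  by (rule kneser_chromatic_eqI[OF proper_colouring_first_diag_colour[OF _ Tri_k_subset_Tri]])
    (auto intro: proper_colouring_Tri_k_3_lower_bound)

theorem theorem1p2:
  fixes n :: nat
  assumes "n \<ge> 3"
  shows "card (Tri_k 3 n) = fib (2 * n - 5) \<and> kneser_chromatic (Tri_k 3 n) = n - 2"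
  using card_Tri_k_3[OF assms] kneser_chromatic_Tri_k_3[OF assms] by simp

end
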